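(* Let $N$ be a positive integer and define polynomials $P_n(x),Q_n(x)$ ($n\ge0$) by $P_0=1$, $P_1=(N+1)-x$, $Q_0=1$, $Q_1=N+1$, and for $n\ge2$ $$P_n=a_nP_{n-1}+b_nP_{n-2},\qquad Q_n=a_nQ_{n-1}+b_nQ_{n-2},$$ where $a_n=N+n$, $b_{2m}=mx$ and $b_{2m+1}=-(N+m)x$ for $m\ge1$. Then for every $n\ge1$: $$P_{2n-1}(x)=\sum_{j=0}^{n}(-1)^j\binom{n}{j}\prod_{l=1}^{2n-j-1}(N+l)\cdot x^j,\qquad P_{2n}(x)=\sum_{j=0}^{n}(-1)^j\binom{n}{j}\prod_{l=1}^{2n-j}(N+l)\cdot x^j,$$ $$Q_{2n-1}(x)=\sum_{j=0}^{n-1}\sum_{k=0}^{j}(-1)^{j-k}(2n-j-1)_k\binom{n-k-1}{j-k}\prod_{l=k+1}^{2n-j-1}(N+l)\cdot x^j,$$ $$Q_{2n}(x)=\sum_{j=0}^{n}\sum_{k=0}^{j}(-1)^{j-k}(2n-j)_k\binom{n-k-1}{j-k}\prod_{l=k+1}^{2n-j}(N+l)\cdot x^j.$$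
   Context: $(y)_k=y(y-1)\cdots(y-k+1)$ denotes the falling factorial, $(y)_0=1$. Conventions: $\binom{a}{k}=0$ for integers $0\le a<k$, $\binom{-1}{0}=1$, and an empty product equals $1$. The quotients $P_n(x)/Q_n(x)$ are the convergents of the continued fraction expansion $\frac{x^N/N!}{e^x-\sum_{i=0}^{N-1}x^i/i!}=1-\cfrac{x}{N+1+\cfrac{x}{N+2-\cfrac{(N+1)x}{N+3+\cfrac{2x}{N+4-\cdots}}}}$. *)

theory Defs
  imports Complex_Main "HOL-Computational_Algebra.Polynomial"
begin

definition falling_fact :: "real \<Rightarrow> nat \<Rightarrow> real" where
  "falling_fact y k = (\<Prod>i<k. (y - of_nat i))"

definition acoef :: "nat \<Rightarrow> nat \<Rightarrow> real poly" where
  "acoef N n = [: of_nat N + of_nat n :]"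

definition bcoef :: "nat \<Rightarrow> nat \<Rightarrow> real poly" where
  "bcoef N n = (if even n then [: 0, of_nat (n div 2) :]
                else [: 0, - (of_nat N + of_nat (n div 2)) :])"

fun Ppol :: "nat \<Rightarrow> nat \<Rightarrow> real poly" where
  "Ppol N 0 = 1"
| "Ppol N (Suc 0) = [: of_nat N + 1, -1 :]"
| "Ppol N (Suc (Suc n)) =
     acoef N (Suc (Suc n)) * Ppol N (Suc n) + bcoef N (Suc (Suc n)) * Ppol N n"

fun Qpol :: "nat \<Rightarrow> nat \<Rightarrow> real poly" where
  "Qpol N 0 = 1"
| "Qpol N (Suc 0) = [: of_nat N + 1 :]"
| "Qpol N (Suc (Suc n)) =
     acoef N (Suc (Suc n)) * Qpol N (Suc n) + bcoef N (Suc (Suc n)) * Qpol N n"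

end

theory Submission
  imports Defs
begin

(* Both families satisfy the same three-term recurrence, so it suffices to check that the claimed
   coefficients obey its coefficientwise form, separately for even and odd indices.  For P this is
   Pascal's rule together with the absorption identity for binomial coefficients.  For Q the
   coefficient of x^i is a sum over k; the recurrence does not hold summand by summand, but the
   defect of the k-th summand is a difference W k - W (k+1) of an explicit antidifference W
   (Q_antidiff), so summing over k telescopes. *)

lemma falling_fact_0 [simp]: "falling_fact x 0 = 1"
  by (simp add: falling_fact_def)

lemma falling_fact_Suc: "falling_fact x (Suc k) = falling_fact x k * (x - of_nat k)"
  by (simp add: falling_fact_def)

lemma falling_fact_Suc_left: "falling_fact (x + 1) (Suc k) = (x + 1) * falling_fact x k"
  by (induction k) (auto simp: falling_fact_Suc algebra_simps)

lemma falling_fact_of_nat_eq_0: "n < k \<Longrightarrow> falling_fact (of_nat n) k = 0"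
  unfolding falling_fact_def by (rule prod_zero) auto

lemma falling_fact_Suc_left_diff:
  "falling_fact (x + 1) (Suc k) - falling_fact x (Suc k) = (of_nat k + 1) * falling_fact x k"
  by (simp only: falling_fact_Suc_left falling_fact_Suc[of x k]) (simp add: algebra_simps)

lemma falling_fact_shift:
  "falling_fact (x + 1) k * (x + 1 - of_nat k) = (x + 1) * falling_fact x k"
  by (metis falling_fact_Suc_left falling_fact_Suc)

lemma pochhammer_Suc_split:
  fixes a :: "'a :: comm_semiring_1"
  assumes "k \<le> m"
  shows "pochhammer (a + 1) m = pochhammer (a + 1) k * (\<Prod>l=k+1..m. a + of_nat l)"
  using assms
proof (induction m rule: dec_induct)
  case (step m)
  then show ?case
    by (simp add: pochhammer_Suc algebra_simps)
qed simp

lemma pochhammer_of_nat_Suc: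
  "pochhammer (real N + 1) (Suc m) = pochhammer (real N + 1) m * (real N + real (Suc m))"
  by (simp add: pochhammer_Suc algebra_simps)

lemma pochhammer_of_nat_pos: "pochhammer (real N + 1) m > 0"
  by (rule pochhammer_pos) simp

lemma pochhammer_quotient_Suc:
  "pochhammer (real N + 1) m / pochhammer (real N + 1) (Suc k) * (real N + real k + 1)
     = pochhammer (real N + 1) m / pochhammer (real N + 1) k"
proof -
  have "pochhammer (real N + 1) (Suc k) = pochhammer (real N + 1) k * (real N + real k + 1)"
    by (simp add: pochhammer_Suc algebra_simps)
  moreover have "pochhammer (real N + 1) k \<noteq> 0" "real N + real k + 1 \<noteq> 0"
    using pochhammer_of_nat_pos[of N k] by simp_all
  ultimately show ?thesis
    by simp
qed

lemma prod_eq_pochhammer_quotient: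
  assumes "k \<le> m"
  shows "(\<Prod>l=k+1..m. real N + real l) = pochhammer (real N + 1) m / pochhammer (real N + 1) k"
  using pochhammer_Suc_split[OF assms, of "real N"] pochhammer_of_nat_pos[of N k] by simp

lemma sum_eq_by_telescoping:
  fixes L R R' W :: "nat \<Rightarrow> 'a :: comm_ring"
  assumes step: "\<And>k. k \<le> j \<Longrightarrow> L k - c * R k - c' * R' k = W k - W (Suc k)"
    and last: "L (Suc j) - c * R (Suc j) = W (Suc j)"
    and start: "W 0 = 0"
  shows "(\<Sum>k=0..Suc j. L k) = c * (\<Sum>k=0..Suc j. R k) + c' * (\<Sum>k=0..j. R' k)"
proof -
  have "(\<Sum>k\<le>j. L k - c * R k - c' * R' k) = (\<Sum>k\<le>j. W k - W (Suc k))"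
    using step by (intro sum.cong) auto
  also have "\<dots> = - W (Suc j)"
    using start by (simp add: sum_telescope)
  finally have "(\<Sum>k\<le>j. L k) - c * (\<Sum>k\<le>j. R k) - c' * (\<Sum>k\<le>j. R' k) = - W (Suc j)"
    by (simp add: sum_subtractf sum_distrib_left)
  then show ?thesis
    using last by (simp add: atLeast0AtMost algebra_simps)
qed

lemma coeff_acoef_bcoef:
  "coeff (acoef N n * p + bcoef N n * q) i =
     (of_nat N + of_nat n) * coeff p i
     + (if i = 0 then 0
        else (if even n then of_nat (n div 2) else - (of_nat N + of_nat (n div 2))) * coeff q (i - 1))"
  by (cases i) (auto simp: acoef_def bcoef_def)

lemma coeff_eq_by_recurrence:
  fixes p :: "nat \<Rightarrow> real poly" and c :: "nat \<Rightarrow> nat \<Rightarrow> real"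
  assumes p_rec: "\<And>m. p (Suc (Suc m)) =
             acoef N (Suc (Suc m)) * p (Suc m) + bcoef N (Suc (Suc m)) * p m"
    and init: "\<And>i. coeff (p 0) i = c 0 i" "\<And>i. coeff (p 1) i = c 1 i"
    and even_step: "\<And>t i. c (2*t+2) i = (of_nat N + of_nat (2*t+2)) * c (2*t+1) i
                     + (if i = 0 then 0 else of_nat (t+1) * c (2*t) (i-1))"
    and odd_step: "\<And>t i. c (2*t+3) i = (of_nat N + of_nat (2*t+3)) * c (2*t+2) i
                     - (if i = 0 then 0 else (of_nat N + of_nat (t+1)) * c (2*t+1) (i-1))"
  shows "coeff (p m) i = c m i"
proof (induction m arbitrary: i rule: less_induct)
  case (less m)
  have "m = 0 \<or> m = 1 \<or> (\<exists>t. m = 2*t+2) \<or> (\<exists>t. m = 2*t+3)"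
    by presburger
  then consider "m = 0" | "m = 1" | t where "m = 2*t+2" | t where "m = 2*t+3"
    by blast
  then show ?case
  proof cases
    case (3 t)
    have IH: "\<And>j. coeff (p (2*t+1)) j = c (2*t+1) j" "\<And>j. coeff (p (2*t)) j = c (2*t) j"
      using less 3 by auto
    have "coeff (p m) i = coeff (acoef N (2*t+2) * p (2*t+1) + bcoef N (2*t+2) * p (2*t)) i"
      using p_rec[of "2*t"] by (simp add: 3)
    also have "\<dots> = c m i"
      unfolding coeff_acoef_bcoef IH 3 even_step
      by simp
    finally show ?thesis .
  next
    case (4 t)
    have IH: "\<And>j. coeff (p (2*t+2)) j = c (2*t+2) j" "\<And>j. coeff (p (2*t+1)) j = c (2*t+1) j"
      using less 4 by auto
    have "coeff (p m) i = coeff (acoef N (2*t+3) * p (2*t+2) + bcoef N (2*t+3) * p (2*t+1)) i"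
      using p_rec[of "2*t+1"] by (simp add: 4 numeral_3_eq_3)
    also have "\<dots> = c m i"
      unfolding coeff_acoef_bcoef IH 4 odd_step
      by (simp add: algebra_simps)
    finally show ?thesis .
  qed (use init in auto)
qed

definition P_coeff :: "nat \<Rightarrow> nat \<Rightarrow> nat \<Rightarrow> real" where
  "P_coeff N m i = (-1)^i * of_nat (((m+1) div 2) choose i) * pochhammer (of_nat N + 1) (m - i)"

lemma P_coeff_even_step:
  "P_coeff N (2*t+2) i = (of_nat N + of_nat (2*t+2)) * P_coeff N (2*t+1) i
     + (if i = 0 then 0 else of_nat (t+1) * P_coeff N (2*t) (i-1))"
proof (cases i)
  case 0
  then show ?thesis
    using pochhammer_of_nat_Suc[of N "2*t+1"] by (simp add: P_coeff_def)
next
  case (Suc j)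
  show ?thesis
  proof (cases "j \<le> t")
    case False
    then show ?thesis by (simp add: P_coeff_def Suc binomial_eq_0 del: binomial_Suc_Suc)
  next
    case True
    define F where "F = pochhammer (real N + 1) (2*t - j)"
    define C1 where "C1 = real ((t+1) choose Suc j)"
    define C0 where "C0 = real (t choose j)"
    have binom: "(real j + 1) * C1 = (real t + 1) * C0"
      unfolding C0_def C1_def
      using arg_cong[OF Suc_times_binomial[of j t], of real] by (simp add: algebra_simps)
    have F_Suc: "pochhammer (real N + 1) (2*t+1 - j) = F * (real N + 2 * real t + 1 - real j)"
      using pochhammer_of_nat_Suc[of N "2*t - j"] True
      by (simp add: F_def Suc_diff_le of_nat_diff)
    have "P_coeff N (2*t+2) i = (-1)^Suc j * C1 * F * (real N + 2 * real t + 1 - real j)"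
      using F_Suc by (simp add: P_coeff_def Suc C1_def)
    moreover have "P_coeff N (2*t+1) i = (-1)^Suc j * C1 * F"
      by (simp add: P_coeff_def Suc C1_def F_def)
    moreover have "P_coeff N (2*t) (i-1) = (-1)^j * C0 * F"
      by (simp add: P_coeff_def Suc C0_def F_def)
    moreover have "(-1)^Suc j * C1 * F * (real N + 2 * real t + 1 - real j)
        = (real N + real (2*t+2)) * ((-1)^Suc j * C1 * F) + real (t+1) * ((-1)^j * C0 * F)"
      using arg_cong[OF binom, of "\<lambda>z. z * F * (-1)^j"] by (simp add: algebra_simps)
    ultimately show ?thesis
      by (simp add: Suc)
  qed
qed

lemma P_coeff_odd_step:
  "P_coeff N (2*t+3) i = (of_nat N + of_nat (2*t+3)) * P_coeff N (2*t+2) i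
     - (if i = 0 then 0 else (of_nat N + of_nat (t+1)) * P_coeff N (2*t+1) (i-1))"
proof (cases i)
  case 0
  then show ?thesis
    using pochhammer_of_nat_Suc[of N "2*t+2"] by (simp add: P_coeff_def numeral_3_eq_3)
next
  case (Suc j)
  show ?thesis
  proof (cases "j \<le> t + 1")
    case False
    then show ?thesis by (simp add: P_coeff_def Suc binomial_eq_0 del: binomial_Suc_Suc)
  next
    case True
    define F where "F = pochhammer (real N + 1) (2*t+1 - j)"
    define C1 where "C1 = real ((t+1) choose Suc j)"
    define C0 where "C0 = real ((t+1) choose j)"
    have binom: "(real t + 1) * C0 = real j * C0 + (real j + 1) * C1"
      unfolding C0_def C1_def binomial_gbinomial
      using gbinomial_mult_1[of "real (t+1)" j] by (simp add: algebra_simps)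
    have F_Suc: "pochhammer (real N + 1) (2*t+2 - j) = F * (real N + 2 * real t + 2 - real j)"
      using pochhammer_of_nat_Suc[of N "2*t+1 - j"] True
      by (simp add: F_def Suc_diff_le of_nat_diff)
    have "P_coeff N (2*t+3) i = (-1)^Suc j * (C0 + C1) * F * (real N + 2 * real t + 2 - real j)"
      using F_Suc by (simp add: P_coeff_def Suc C0_def C1_def numeral_3_eq_3)
    moreover have "P_coeff N (2*t+2) i = (-1)^Suc j * C1 * F"
      by (simp add: P_coeff_def Suc C1_def F_def)
    moreover have "P_coeff N (2*t+1) (i-1) = (-1)^j * C0 * F"
      by (simp add: P_coeff_def Suc C0_def F_def)
    moreover have "(-1)^Suc j * (C0 + C1) * F * (real N + 2 * real t + 2 - real j)
        = (real N + real (2*t+3)) * ((-1)^Suc j * C1 * F)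
          - (real N + real (t+1)) * ((-1)^j * C0 * F)"
      using arg_cong[OF binom, of "\<lambda>z. z * F * (-1)^j"] by (simp add: algebra_simps)
    ultimately show ?thesis
      by (simp add: Suc)
  qed
qed

lemma coeff_Ppol: "coeff (Ppol N m) i = P_coeff N m i"
proof (rule coeff_eq_by_recurrence[OF Ppol.simps(3) _ _ P_coeff_even_step P_coeff_odd_step])
  fix i
  show "coeff (Ppol N 0) i = P_coeff N 0 i"
    by (cases i) (simp_all add: P_coeff_def)
  show "coeff (Ppol N 1) i = P_coeff N 1 i"
    by (cases i) (simp_all add: P_coeff_def coeff_pCons split: nat.split)
qed

lemma Ppol_eq_sum:
  "Ppol N m = (\<Sum>j=0..(m+1) div 2. monom ((-1)^j * of_nat (((m+1) div 2) choose j)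
                 * (\<Prod>l=1..m-j. (of_nat N + of_nat l))) j)"
  using prod_eq_pochhammer_quotient[of 0 _ N]
  by (intro poly_eqI) (simp add: coeff_sum coeff_Ppol P_coeff_def)

definition Q_summand :: "nat \<Rightarrow> nat \<Rightarrow> nat \<Rightarrow> nat \<Rightarrow> real" where
  "Q_summand N m i k = (-1)^(i-k) * falling_fact (of_nat (m-i)) k
     * ((of_nat ((m+1) div 2) - of_nat k - 1) gchoose (i-k))
     * (pochhammer (of_nat N + 1) (m-i) / pochhammer (of_nat N + 1) k)"

(* The cut-off i \<le> m div 2 only matters for m = 0: for m \<ge> 1 the summands beyond it vanish
   (Q_summand_eq_0). *)
definition Q_coeff :: "nat \<Rightarrow> nat \<Rightarrow> nat \<Rightarrow> real" where
  "Q_coeff N m i = (if i \<le> m div 2 then \<Sum>k=0..i. Q_summand N m i k else 0)"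

(* The antidifference W of the telescoping argument, for the step from Q_m, Q_(m+1) to Q_(m+2). *)
definition Q_antidiff :: "nat \<Rightarrow> nat \<Rightarrow> nat \<Rightarrow> nat \<Rightarrow> real" where
  "Q_antidiff N m i k = (-1)^(i-k)
     * (falling_fact (of_nat (m+2-i)) k - falling_fact (of_nat (m+1-i)) k)
     * ((of_nat ((m+3) div 2) - of_nat k - 1) gchoose (i-k))
     * (of_nat N + of_nat k) * (pochhammer (of_nat N + 1) (m+1-i) / pochhammer (of_nat N + 1) k)"

lemma Q_antidiff_0 [simp]: "Q_antidiff N m i 0 = 0"
  by (simp add: Q_antidiff_def)

lemma Q_summand_eq_0:
  assumes "1 \<le> m" "m div 2 < i" "k \<le> i"
  shows "Q_summand N m i k = 0"
proof (cases "k < (m+1) div 2")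
  case True
  then have "real ((m+1) div 2) - real k - 1 = real ((m+1) div 2 - k - 1)"
    by (simp add: of_nat_diff)
  then have "(real ((m+1) div 2) - real k - 1) gchoose (i-k) = real (((m+1) div 2 - k - 1) choose (i-k))"
    by (simp only: binomial_gbinomial)
  also have "\<dots> = 0"
    using True assms by (simp add: binomial_eq_0)
  finally show ?thesis
    unfolding Q_summand_def by simp
next
  case False
  then have "m - i < k" using assms by linarith
  then show ?thesis by (simp add: Q_summand_def falling_fact_of_nat_eq_0)
qed

lemma Q_summand_last_step:
  assumes "i \<le> m + 1"
  shows "Q_summand N (m+2) i i - (of_nat N + of_nat (m+2)) * Q_summand N (m+1) i i
    = Q_antidiff N m i i"
proof -
  define M where "M = m + 1 - i"
  define a where "a = falling_fact (real M) i"
  define b where "b = falling_fact (real M + 1) i"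
  define h where "h = pochhammer (real N + 1) M / pochhammer (real N + 1) i"
  have idx: "m + 2 - i = Suc M" "m + 1 - i = M" "real m + 2 = real M + real i + 1"
    using assms by (auto simp: M_def of_nat_diff)
  have ff: "b * (real M + 1 - real i) = (real M + 1) * a"
    unfolding a_def b_def using falling_fact_shift[of "real M" i] by (simp add: algebra_simps)
  have "Q_summand N (m+2) i i = b * (h * (real N + real M + 1))"
    unfolding Q_summand_def idx pochhammer_of_nat_Suc
    by (simp add: b_def h_def algebra_simps)
  moreover have "Q_summand N (m+1) i i = a * h"
    unfolding Q_summand_def idx by (simp add: a_def h_def)
  moreover have "Q_antidiff N m i i = (b - a) * (real N + real i) * h"
    unfolding Q_antidiff_def idx by (simp add: a_def b_def h_def algebra_simps)
  moreover have "real (m+2) = real m + 2"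
    by simp
  ultimately show ?thesis
    using ff idx(3) by algebra
qed

lemma Q_summand_even_step:
  assumes "k + d + 1 \<le> t + 1"
  shows "Q_summand N (2*t+2) (k+d+1) k - (of_nat N + of_nat (2*t+2)) * Q_summand N (2*t+1) (k+d+1) k
           - of_nat (t+1) * Q_summand N (2*t) (k+d) k
         = Q_antidiff N (2*t) (k+d+1) k - Q_antidiff N (2*t) (k+d+1) (Suc k)"
proof -
  define M where "M = 2*t - k - d"
  define a where "a = falling_fact (real M) k"
  define b where "b = falling_fact (real M + 1) k"
  define c0 where "c0 = (real t - real k - 1) gchoose d"
  define c1 where "c1 = (real t - real k) gchoose Suc d"
  define h where "h = pochhammer (real N + 1) M / pochhammer (real N + 1) k"
  define h' where "h' = pochhammer (real N + 1) M / pochhammer (real N + 1) (Suc k)"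
  define s where "s = (-1::real)^d"
  have idx: "2*t+2 - (k+d+1) = Suc M" "2*t+1 - (k+d+1) = M" "2*t - (k+d) = M"
    "k+d+1 - k = Suc d" "k+d - k = d" "k+d+1 - Suc k = d" "real (Suc M) = real M + 1"
    using assms by (auto simp: M_def)
  have M_real: "real M = 2 * real t - real k - real d"
    using assms by (simp add: M_def of_nat_diff)
  have args: "real ((2*t+2+1) div 2) - real k - 1 = real t - real k"
    "real ((2*t+1+1) div 2) - real k - 1 = real t - real k"
    "real ((2*t+1) div 2) - real k - 1 = real t - real k - 1"
    "real ((2*t+3) div 2) - real k - 1 = real t - real k"
    "real ((2*t+3) div 2) - real (Suc k) - 1 = real t - real k - 1"
    by simp_all
  have ff: "b * (real M + 1 - real k) = (real M + 1) * a"
    unfolding a_def b_def using falling_fact_shift[of "real M" k] by (simp add: algebra_simps)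
  have binom: "(real d + 1) * c1 = (real t - real k) * c0"
    unfolding c0_def c1_def using gbinomial_absorption[of d "real t - real k"] by (simp add: add.commute)
  have quot: "h' * (real N + real k + 1) = h"
    unfolding h_def h'_def by (rule pochhammer_quotient_Suc)
  have L: "Q_summand N (2*t+2) (k+d+1) k = - s * b * c1 * (h * (real N + real M + 1))"
    unfolding Q_summand_def idx args pochhammer_of_nat_Suc
    by (simp add: b_def c1_def h_def s_def algebra_simps)
  have R1: "Q_summand N (2*t+1) (k+d+1) k = - s * a * c1 * h"
    unfolding Q_summand_def idx args by (simp add: a_def c1_def h_def s_def)
  have R0: "Q_summand N (2*t) (k+d) k = s * a * c0 * h"
    unfolding Q_summand_def idx args by (simp add: a_def c0_def h_def s_def)
  have W0: "Q_antidiff N (2*t) (k+d+1) k = - s * (b - a) * c1 * (real N + real k) * h"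
    unfolding Q_antidiff_def idx args by (simp add: a_def b_def c1_def h_def s_def)
  have W1: "Q_antidiff N (2*t) (k+d+1) (Suc k)
      = s * ((real k + 1) * a) * c0 * (real N + real k + 1) * h'"
    unfolding Q_antidiff_def idx args falling_fact_Suc_left_diff
    by (simp add: a_def c0_def h'_def s_def algebra_simps)
  have coeffs: "real (2*t+2) = 2 * real t + 2" "real (t+1) = real t + 1"
    by simp_all
  show ?thesis
    unfolding L R1 R0 W0 W1 coeffs using ff binom quot M_real by algebra
qed

lemma Q_summand_odd_step:
  assumes "k + d + 1 \<le> t + 1"
  shows "Q_summand N (2*t+3) (k+d+1) k - (of_nat N + of_nat (2*t+3)) * Q_summand N (2*t+2) (k+d+1) k
           + (of_nat N + of_nat (t+1)) * Q_summand N (2*t+1) (k+d) k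
         = Q_antidiff N (2*t+1) (k+d+1) k - Q_antidiff N (2*t+1) (k+d+1) (Suc k)"
proof -
  define M where "M = 2*t + 1 - k - d"
  define a where "a = falling_fact (real M) k"
  define b where "b = falling_fact (real M + 1) k"
  define c0 where "c0 = (real t - real k) gchoose d"
  define c1 where "c1 = (real t - real k) gchoose Suc d"
  define h where "h = pochhammer (real N + 1) M / pochhammer (real N + 1) k"
  define h' where "h' = pochhammer (real N + 1) M / pochhammer (real N + 1) (Suc k)"
  define s where "s = (-1::real)^d"
  have idx: "2*t+3 - (k+d+1) = Suc M" "2*t+2 - (k+d+1) = M" "2*t+1 - (k+d) = M"
    "2*t+1+2 - (k+d+1) = Suc M" "2*t+1+1 - (k+d+1) = M"
    "k+d+1 - k = Suc d" "k+d - k = d" "k+d+1 - Suc k = d" "real (Suc M) = real M + 1"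
    using assms by (auto simp: M_def)
  have M_real: "real M = 2 * real t + 1 - real k - real d"
    using assms by (simp add: M_def of_nat_diff)
  have pascal: "(real t - real k + 1) gchoose Suc d = c0 + c1"
    unfolding c0_def c1_def by (rule gbinomial_Suc_Suc)
  have args: "real ((2*t+3+1) div 2) - real k - 1 = real t - real k + 1"
    "real ((2*t+2+1) div 2) - real k - 1 = real t - real k"
    "real ((2*t+1+1) div 2) - real k - 1 = real t - real k"
    "real ((2*t+1+3) div 2) - real k - 1 = real t - real k + 1"
    "real ((2*t+1+3) div 2) - real (Suc k) - 1 = real t - real k"
    by simp_all
  have ff: "b * (real M + 1 - real k) = (real M + 1) * a"
    unfolding a_def b_def using falling_fact_shift[of "real M" k] by (simp add: algebra_simps)
  have binom: "(real t - real k) * c0 = real d * c0 + (real d + 1) * c1"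
    unfolding c0_def c1_def using gbinomial_mult_1[of "real t - real k" d] by (simp add: add.commute)
  have quot: "h' * (real N + real k + 1) = h"
    unfolding h_def h'_def by (rule pochhammer_quotient_Suc)
  have L: "Q_summand N (2*t+3) (k+d+1) k = - s * b * (c0 + c1) * (h * (real N + real M + 1))"
    unfolding Q_summand_def idx args pascal pochhammer_of_nat_Suc
    by (simp add: b_def h_def s_def algebra_simps)
  have R1: "Q_summand N (2*t+2) (k+d+1) k = - s * a * c1 * h"
    unfolding Q_summand_def idx args by (simp add: a_def c1_def h_def s_def)
  have R0: "Q_summand N (2*t+1) (k+d) k = s * a * c0 * h"
    unfolding Q_summand_def idx args by (simp add: a_def c0_def h_def s_def)
  have W0: "Q_antidiff N (2*t+1) (k+d+1) k = - s * (b - a) * (c0 + c1) * (real N + real k) * h"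
    unfolding Q_antidiff_def idx args pascal by (simp add: a_def b_def h_def s_def)
  have W1: "Q_antidiff N (2*t+1) (k+d+1) (Suc k)
      = s * ((real k + 1) * a) * c0 * (real N + real k + 1) * h'"
    unfolding Q_antidiff_def idx args falling_fact_Suc_left_diff
    by (simp add: a_def c0_def h'_def s_def algebra_simps)
  have coeffs: "real (2*t+3) = 2 * real t + 3" "real (t+1) = real t + 1"
    by simp_all
  show ?thesis
    unfolding L R1 R0 W0 W1 coeffs using ff binom quot M_real by algebra
qed

lemma Q_coeff_even_step:
  "Q_coeff N (2*t+2) i = (of_nat N + of_nat (2*t+2)) * Q_coeff N (2*t+1) i
     + (if i = 0 then 0 else of_nat (t+1) * Q_coeff N (2*t) (i-1))"
proof (cases i)
  case 0
  then show ?thesis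
    using pochhammer_of_nat_Suc[of N "2*t+1"] by (simp add: Q_coeff_def Q_summand_def)
next
  case (Suc j)
  show ?thesis
  proof (cases "j \<le> t")
    case False
    then show ?thesis by (simp add: Q_coeff_def Suc)
  next
    case True
    have "(\<Sum>k=0..Suc j. Q_summand N (2*t+2) (Suc j) k)
        = (of_nat N + of_nat (2*t+2)) * (\<Sum>k=0..Suc j. Q_summand N (2*t+1) (Suc j) k)
          + of_nat (t+1) * (\<Sum>k=0..j. Q_summand N (2*t) j k)"
    proof (rule sum_eq_by_telescoping[where W = "Q_antidiff N (2*t) (Suc j)"])
      fix k
      assume "k \<le> j"
      then show "Q_summand N (2*t+2) (Suc j) k - (of_nat N + of_nat (2*t+2)) * Q_summand N (2*t+1) (Suc j) k
          - of_nat (t+1) * Q_summand N (2*t) j k = Q_antidiff N (2*t) (Suc j) k - Q_antidiff N (2*t) (Suc j) (Suc k)"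
        using Q_summand_even_step[of k "j - k" t N] True by simp
    qed (use Q_summand_last_step[of "Suc j" "2*t" N] True in simp_all)
    moreover have "Q_coeff N (2*t+1) (Suc j) = (\<Sum>k=0..Suc j. Q_summand N (2*t+1) (Suc j) k)"
    proof (cases "j < t")
      case False
      then have "(2*t+1) div 2 < Suc j" by simp
      then show ?thesis
        by (simp add: Q_coeff_def Q_summand_eq_0)
    qed (simp add: Q_coeff_def)
    ultimately show ?thesis
      using True by (simp add: Q_coeff_def Suc)
  qed
qed

lemma Q_coeff_odd_step:
  "Q_coeff N (2*t+3) i = (of_nat N + of_nat (2*t+3)) * Q_coeff N (2*t+2) i
     - (if i = 0 then 0 else (of_nat N + of_nat (t+1)) * Q_coeff N (2*t+1) (i-1))"
proof (cases i)
  case 0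
  then show ?thesis
    using pochhammer_of_nat_Suc[of N "2*t+2"] by (simp add: Q_coeff_def Q_summand_def numeral_3_eq_3)
next
  case (Suc j)
  show ?thesis
  proof (cases "j \<le> t")
    case False
    then show ?thesis by (simp add: Q_coeff_def Suc)
  next
    case True
    have "(\<Sum>k=0..Suc j. Q_summand N (2*t+3) (Suc j) k)
        = (of_nat N + of_nat (2*t+3)) * (\<Sum>k=0..Suc j. Q_summand N (2*t+2) (Suc j) k)
          + (- (of_nat N + of_nat (t+1))) * (\<Sum>k=0..j. Q_summand N (2*t+1) j k)"
    proof (rule sum_eq_by_telescoping[where W = "Q_antidiff N (2*t+1) (Suc j)"])
      fix k
      assume "k \<le> j"
      then show "Q_summand N (2*t+3) (Suc j) k - (of_nat N + of_nat (2*t+3)) * Q_summand N (2*t+2) (Suc j) k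
          - (- (of_nat N + of_nat (t+1))) * Q_summand N (2*t+1) j k
          = Q_antidiff N (2*t+1) (Suc j) k - Q_antidiff N (2*t+1) (Suc j) (Suc k)"
        using Q_summand_odd_step[of k "j - k" t N] True by (simp add: algebra_simps)
    qed (use Q_summand_last_step[of "Suc j" "2*t+1" N] True in \<open>simp_all add: numeral_3_eq_3\<close>)
    then show ?thesis
      using True unfolding mult_minus_left diff_conv_add_uminus[symmetric]
      by (simp add: Q_coeff_def Suc)
  qed
qed

lemma coeff_Qpol: "coeff (Qpol N m) i = Q_coeff N m i"
proof (rule coeff_eq_by_recurrence[OF Qpol.simps(3) _ _ Q_coeff_even_step Q_coeff_odd_step])
  fix i
  show "coeff (Qpol N 0) i = Q_coeff N 0 i"
    by (cases i) (simp_all add: Q_coeff_def Q_summand_def)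
  show "coeff (Qpol N 1) i = Q_coeff N 1 i"
    by (cases i) (simp_all add: Q_coeff_def Q_summand_def)
qed

lemma Q_summand_eq_prod:
  "Q_summand N m i k = (-1)^(i-k) * falling_fact (of_nat (m-i)) k
     * (of_int (int ((m+1) div 2) - int k - 1) gchoose (i-k))
     * (\<Prod>l=k+1..m-i. (of_nat N + of_nat l))"
proof (cases "k \<le> m - i")
  case True
  show ?thesis
    unfolding Q_summand_def prod_eq_pochhammer_quotient[OF True] by simp
next
  case False
  then show ?thesis
    by (simp add: Q_summand_def falling_fact_of_nat_eq_0)
qed

lemma Qpol_eq_sum:
  "Qpol N m = (\<Sum>j=0..m div 2. \<Sum>k=0..j. monom ((-1)^(j-k) * falling_fact (of_nat (m-j)) k
                 * (of_int (int ((m+1) div 2) - int k - 1) gchoose (j-k))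
                 * (\<Prod>l=k+1..m-j. (of_nat N + of_nat l))) j)"
  by (intro poly_eqI)
    (simp add: monom_sum[symmetric] coeff_sum coeff_Qpol Q_coeff_def Q_summand_eq_prod)

theorem theorem4:
  fixes N n :: nat
  assumes "N \<ge> 1" and "n \<ge> 1"
  shows
   "Ppol N (2*n - 1) =
      (\<Sum>j=0..n. monom ((-1)^j * of_nat (n choose j)
                    * (\<Prod>l=1..2*n-j-1. (of_nat N + of_nat l))) j)
    \<and> Ppol N (2*n) =
      (\<Sum>j=0..n. monom ((-1)^j * of_nat (n choose j)
                    * (\<Prod>l=1..2*n-j. (of_nat N + of_nat l))) j)
    \<and> Qpol N (2*n - 1) =
      (\<Sum>j=0..n-1. \<Sum>k=0..j. monom ((-1)^(j-k) * falling_fact (of_nat (2*n-j-1)) k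
                    * (of_int (int n - int k - 1) gchoose (j-k))
                    * (\<Prod>l=k+1..2*n-j-1. (of_nat N + of_nat l))) j)
    \<and> Qpol N (2*n) =
      (\<Sum>j=0..n. \<Sum>k=0..j. monom ((-1)^(j-k) * falling_fact (of_nat (2*n-j)) k
                    * (of_int (int n - int k - 1) gchoose (j-k))
                    * (\<Prod>l=k+1..2*n-j. (of_nat N + of_nat l))) j)"
proof -
  have halves: "(2*n - 1 + 1) div 2 = n" "(2*n + 1) div 2 = n" "(2*n - 1) div 2 = n - 1" "2*n div 2 = n"
    using assms(2) by auto
  have swap: "\<And>j. 2*n - 1 - j = 2*n - j - 1"
    by simp
  show ?thesis
    using Ppol_eq_sum[of N "2*n - 1"] Ppol_eq_sum[of N "2*n"]
      Qpol_eq_sum[of N "2*n - 1"] Qpol_eq_sum[of N "2*n"]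
    unfolding halves swap by blast
qed

end
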